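(* Let $\eta\in(0,1)$, $N_B\ge 0$, $N_{\rm coh}\ge 0$ and $r\in(0,1]$ be fixed, and for $\theta\in\mathbb{R}$ consider the single-mode Gaussian probe with first-moment vector $\mathbf{d}_S=\sqrt{2N_{\rm coh}}\,(\cos\theta,\sin\theta)^\top$ and covariance matrix $\boldsymbol{\Sigma}_S=\mathrm{diag}(r/2,\,1/(2r))$. Let $I^{\rm IF}_\eta(\theta)$ denote the quantum Fisher information of $\eta$ for the corresponding output state (defined in the context). Then $\theta\mapsto I^{\rm IF}_\eta(\theta)$ attains its maximum over $\mathbb{R}$ at $\theta=n\pi$ for every integer $n$.
   Context: Quadratures $\mathbf{R}=(q,p)^\top$ with $[R_i,R_j]=\mathrm{i}\Omega_{ij}$, $\boldsymbol\Omega=\begin{bmatrix}0&1\\-1&0\end{bmatrix}$; covariance matrix $\Sigma_{ij}=\tfrac12\langle R_iR_j+R_jR_i\rangle-\langle R_i\rangle\langle R_j\rangle$ (vacuum has $\boldsymbol\Sigma=\mathbb{I}_2/2$), first moments $d_i=\langle R_i\rangle$. The thermal lossy channel with transmission $\eta$ and thermal photon number $N_B$ (Heisenberg picture $a\mapsto \eta a+\sqrt{1-\eta^2}\,h$, $h$ thermal with $\langle h^\dagger h\rangle=N_B$) maps a Gaussian state with moments $(\mathbf d_S,\boldsymbol\Sigma_S)$ to the Gaussian state with $\tilde{\mathbf d}=\eta\mathbf d_S$ and $\tilde{\boldsymbol\Sigma}=\eta^2\boldsymbol\Sigma_S+y\,\mathbb{I}_2$, where $y=(1-\eta^2)(N_B+\tfrac12)$.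 The quantum Fisher information of $\eta$ for this single-mode Gaussian output is $I_\eta=\frac{\mathrm{Tr}\{(\tilde{\boldsymbol\Sigma}^{-1}\partial_\eta\tilde{\boldsymbol\Sigma})^2\}}{2(1+\mu^2)}+\frac{2(\partial_\eta\mu)^2}{1-\mu^4}+(\partial_\eta\tilde{\mathbf d})^\top\tilde{\boldsymbol\Sigma}^{-1}(\partial_\eta\tilde{\mathbf d})$, with purity $\mu=(4\det\tilde{\boldsymbol\Sigma})^{-1/2}$. *)

theory Defs
  imports "HOL-Analysis.Analysis"
begin

definition gauss_purity :: "real^2^2 \<Rightarrow> real" where
  "gauss_purity S = 1 / sqrt (4 * det S)"

definition gauss_qfi :: "(real \<Rightarrow> real^2) \<Rightarrow> (real \<Rightarrow> real^2^2) \<Rightarrow> real \<Rightarrow> real" where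
  "gauss_qfi d Sig eta =
     (let S = Sig eta;
          Si = matrix_inv S;
          dS = (\<chi> i j. deriv (\<lambda>t. Sig t $ i $ j) eta);
          dd = (\<chi> i. deriv (\<lambda>t. d t $ i) eta);
          mu = gauss_purity S;
          dmu = deriv (\<lambda>t. gauss_purity (Sig t)) eta
      in trace ((Si ** dS) ** (Si ** dS)) / (2 * (1 + mu^2))
         + 2 * dmu^2 / (1 - mu^4)
         + dd \<bullet> (Si *v dd))"

text \<open>Thermal lossy channel on first and second moments.\<close>

definition loss_d :: "real \<Rightarrow> real^2 \<Rightarrow> real^2" where
  "loss_d eta dS = eta *\<^sub>R dS"

definition loss_Sigma :: "real \<Rightarrow> real \<Rightarrow> real^2^2 \<Rightarrow> real^2^2" where
  "loss_Sigma NB eta SS = eta^2 *\<^sub>R SS + ((1 - eta^2) * (NB + 1/2)) *\<^sub>R mat 1"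

definition probe_d :: "real \<Rightarrow> real \<Rightarrow> real^2" where
  "probe_d Ncoh \<theta> = sqrt (2 * Ncoh) *\<^sub>R vector [cos \<theta>, sin \<theta>]"

definition probe_Sigma :: "real \<Rightarrow> real^2^2" where
  "probe_Sigma r = (\<chi> i j. if i = j then (vector [r/2, 1/(2*r)] :: real^2) $ i else 0)"

definition I_IF :: "real \<Rightarrow> real \<Rightarrow> real \<Rightarrow> real \<Rightarrow> real \<Rightarrow> real" where
  "I_IF NB Ncoh r eta \<theta> =
     gauss_qfi (\<lambda>t. loss_d t (probe_d Ncoh \<theta>)) (\<lambda>t. loss_Sigma NB t (probe_Sigma r)) eta"

end

theory Submission
  imports Defs
begin

text \<open>The channel does not mix quadratures and the probe covariance is diagonal, so the output
  covariance is \<open>diag(a, b)\<close> with \<open>a \<le> b\<close> (because \<open>r \<le> 1\<close>), and it does not depend on \<open>\<theta>\<close>.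
  Hence only the displacement term of the Fisher information depends on \<open>\<theta>\<close>; it equals
  \<open>2 N\<^sub>c\<^sub>o\<^sub>h (cos\<^sup>2 \<theta> / a + sin\<^sup>2 \<theta> / b)\<close>, which is largest when all the displacement lies
  along the quadrature of smaller variance, i.e. when \<open>sin \<theta> = 0\<close>.\<close>

lemma matrix_inv_eqI:
  fixes A :: "'a::semiring_1^'n^'m" and B :: "'a^'m^'n"
  assumes "A ** B = mat 1" "B ** A = mat 1"
  shows "matrix_inv A = B"
proof -
  have inv: "A ** matrix_inv A = mat 1 \<and> matrix_inv A ** A = mat 1"
    unfolding matrix_inv_def by (rule someI[of _ B]) (use assms in blast)
  have "matrix_inv A = matrix_inv A ** (A ** B)"
    using assms by simp
  also have "\<dots> = (matrix_inv A ** A) ** B"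
    by (simp add: matrix_mul_assoc)
  also have "\<dots> = B"
    using inv by simp
  finally show ?thesis .
qed

definition diag2 :: "'a::zero \<Rightarrow> 'a \<Rightarrow> 'a^2^2" where
  "diag2 a b = (\<chi> i j. if i = j then (vector [a, b] :: 'a^2) $ i else 0)"

lemma probe_Sigma_eq_diag2: "probe_Sigma r = diag2 (r / 2) (1 / (2 * r))"
  by (simp add: probe_Sigma_def diag2_def)

lemma loss_Sigma_diag2:
  "loss_Sigma NB eta (diag2 a b) =
     diag2 (eta\<^sup>2 * a + (1 - eta\<^sup>2) * (NB + 1/2)) (eta\<^sup>2 * b + (1 - eta\<^sup>2) * (NB + 1/2))"
  by (simp add: loss_Sigma_def diag2_def vec_eq_iff forall_2 mat_def)

lemma matrix_inv_diag2:
  fixes a b :: "'a::field"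
  assumes "a \<noteq> 0" "b \<noteq> 0"
  shows "matrix_inv (diag2 a b) = diag2 (1 / a) (1 / b)"
  using assms
  by (intro matrix_inv_eqI)
     (auto simp: diag2_def vec_eq_iff forall_2 matrix_matrix_mult_def sum_2 mat_def)

lemma inner_diag2_mult:
  fixes v :: "real^2"
  shows "v \<bullet> (diag2 a b *v v) = a * (v $ 1)\<^sup>2 + b * (v $ 2)\<^sup>2"
  by (simp add: diag2_def inner_vec_def matrix_vector_mult_def sum_2 power2_eq_square)

lemma gauss_qfi_loss_d:
  "gauss_qfi (\<lambda>t. loss_d t v) Sig eta =
     gauss_qfi (\<lambda>_. 0) Sig eta + v \<bullet> (matrix_inv (Sig eta) *v v)"
proof -
  have "deriv (\<lambda>t. loss_d t v $ i) eta = v $ i" for i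
    unfolding loss_d_def
    by (rule DERIV_imp_deriv) (auto intro!: derivative_eq_intros)
  moreover have "(\<chi> i. 0) = (0 :: real^2)"
    by (simp add: vec_eq_iff)
  ultimately show ?thesis
    by (simp add: gauss_qfi_def Let_def)
qed

lemma probe_d_displacement_diag2:
  assumes "Ncoh \<ge> 0"
  shows "probe_d Ncoh \<theta> \<bullet> (diag2 (1 / a) (1 / b) *v probe_d Ncoh \<theta>) =
           2 * Ncoh * ((cos \<theta>)\<^sup>2 / a + (sin \<theta>)\<^sup>2 / b)"
  using assms by (simp add: inner_diag2_mult probe_d_def power_mult_distrib ring_distribs)

lemma cos_sin_sq_weighted_le:
  fixes a b :: real
  assumes "0 < a" "a \<le> b"
  shows "(cos \<theta>)\<^sup>2 / a + (sin \<theta>)\<^sup>2 / b \<le> 1 / a"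
proof -
  have "(cos \<theta>)\<^sup>2 / a + (sin \<theta>)\<^sup>2 / b \<le> (cos \<theta>)\<^sup>2 / a + (sin \<theta>)\<^sup>2 / a"
    using assms by (intro add_left_mono divide_left_mono) auto
  also have "\<dots> = 1 / a"
    by (simp add: add_divide_distrib[symmetric])
  finally show ?thesis .
qed

theorem lemma1:
  fixes eta NB Ncoh r :: real
  assumes "0 < eta" "eta < 1" "NB \<ge> 0" "Ncoh \<ge> 0" "0 < r" "r \<le> 1"
  shows "\<forall>n::int. \<forall>\<theta>::real. I_IF NB Ncoh r eta \<theta> \<le> I_IF NB Ncoh r eta (of_int n * pi)"
proof (intro allI)
  fix n :: int and \<theta> :: real
  define y where "y = (1 - eta\<^sup>2) * (NB + 1/2)"
  define a where "a = eta\<^sup>2 * (r / 2) + y"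
  define b where "b = eta\<^sup>2 * (1 / (2 * r)) + y"
  have "y \<ge> 0"
    using assms by (simp add: y_def power_le_one)
  then have a_pos: "0 < a"
    using assms by (simp add: a_def add_pos_nonneg)
  have "r / 2 \<le> 1 / (2 * r)"
    using assms by (simp add: field_simps mult_le_one)
  then have a_le_b: "a \<le> b"
    unfolding a_def b_def by (intro add_right_mono mult_left_mono) simp_all
  have I_IF_eq: "I_IF NB Ncoh r eta \<phi> =
      gauss_qfi (\<lambda>_. 0) (\<lambda>t. loss_Sigma NB t (probe_Sigma r)) eta
      + 2 * Ncoh * ((cos \<phi>)\<^sup>2 / a + (sin \<phi>)\<^sup>2 / b)" for \<phi>
    using a_pos a_le_b assms(4)
    by (simp add: I_IF_def gauss_qfi_loss_d probe_Sigma_eq_diag2 loss_Sigma_diag2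
        matrix_inv_diag2 probe_d_displacement_diag2 a_def b_def y_def)
  have "sin (of_int n * pi) = 0"
    by (simp add: sin_zero_iff_int2)
  then have "(cos (of_int n * pi))\<^sup>2 / a + (sin (of_int n * pi))\<^sup>2 / b = 1 / a"
    by (simp add: cos_squared_eq)
  moreover have "2 * Ncoh * ((cos \<theta>)\<^sup>2 / a + (sin \<theta>)\<^sup>2 / b) \<le> 2 * Ncoh * (1 / a)"
    using assms(4) by (intro mult_left_mono cos_sin_sq_weighted_le a_pos a_le_b) simp
  ultimately show "I_IF NB Ncoh r eta \<theta> \<le> I_IF NB Ncoh r eta (of_int n * pi)"
    by (simp add: I_IF_eq)
qed

end
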